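(* Suppose $k$ is a local field, $X$ a topological space, and $A$ a Banach $k$-algebra. Then every injective unital $k$-algebra homomorphism $\phi:C_{bd}(X,k)\to A$ whose image is closed in $A$ is continuous with respect to the supremum norm on $C_{bd}(X,k)$. In particular, if $V$ is a $k$-Banach space and $\rho:C_{bd}(X,k)\to\mathcal B_k(V)$ is an injective $k$-algebra homomorphism into the bounded operators with closed image, then $\rho$ is bounded.
   Context: A local field means a complete discretely valued field with finite residue field. $C_{bd}(X,k)$ is the $k$-algebra of bounded continuous functions $X\to k$ with the supremum norm. A Banach $k$-algebra is a unital $k$-algebra with a complete norm satisfying $\|f+g\|\le\max(\|f\|,\|g\|)$, $\|fg\|\le\|f\|\|g\|$, $\|af\|=|a|\|f\|$ for $a\in k$, and $\|1\|=1$. For a non-Archimedean $k$-Banach space $V$, $\mathcal B_k(V)$ is the Banach $k$-algebra of bounded $k$-linear operators on $V$ with operator norm. *)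

theory Defs
  imports Main "HOL-Analysis.Analysis"
begin

definition kcauchy :: "('b \<Rightarrow> real) \<Rightarrow> (nat \<Rightarrow> 'b::ab_group_add) \<Rightarrow> bool" where
  "kcauchy nm s \<longleftrightarrow> (\<forall>e>0. \<exists>N. \<forall>m\<ge>N. \<forall>n\<ge>N. nm (s m - s n) < e)"

definition kconverges :: "('b \<Rightarrow> real) \<Rightarrow> (nat \<Rightarrow> 'b::ab_group_add) \<Rightarrow> 'b \<Rightarrow> bool" where
  "kconverges nm s l \<longleftrightarrow> (\<lambda>n. nm (s n - l)) \<longlonglongrightarrow> 0"

text \<open>A local field: a field with a non-Archimedean absolute value which is
  discrete and nontrivial, complete, and with finite residue field.\<close>
definition local_field :: "('k::field \<Rightarrow> real) \<Rightarrow> bool" where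
  "local_field v \<longleftrightarrow>
     (\<forall>x. 0 \<le> v x) \<and> (\<forall>x. v x = 0 \<longleftrightarrow> x = 0) \<and>
     (\<forall>x y. v (x * y) = v x * v y) \<and>
     (\<forall>x y. v (x + y) \<le> max (v x) (v y)) \<and>
     (\<exists>\<pi>. 0 < v \<pi> \<and> v \<pi> < 1 \<and> (\<forall>x. x \<noteq> 0 \<longrightarrow> (\<exists>n::int. v x = v \<pi> powi n))) \<and>
     (\<forall>s. kcauchy v s \<longrightarrow> (\<exists>l. kconverges v s l)) \<and>
     finite ({x. v x \<le> 1} // {(x, y). v x \<le> 1 \<and> v y \<le> 1 \<and> v (x - y) < 1})"

definition banach_k_algebra ::
  "('k::field \<Rightarrow> real) \<Rightarrow> ('k \<Rightarrow> 'a::ring_1 \<Rightarrow> 'a) \<Rightarrow> ('a \<Rightarrow> real) \<Rightarrow> bool" where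
  "banach_k_algebra v sm nA \<longleftrightarrow>
     (\<forall>c x y. sm c (x + y) = sm c x + sm c y) \<and>
     (\<forall>c d x. sm (c + d) x = sm c x + sm d x) \<and>
     (\<forall>c d x. sm (c * d) x = sm c (sm d x)) \<and>
     (\<forall>x. sm 1 x = x) \<and>
     (\<forall>c x y. sm c (x * y) = sm c x * y \<and> sm c (x * y) = x * sm c y) \<and>
     (\<forall>x. 0 \<le> nA x) \<and> (\<forall>x. nA x = 0 \<longleftrightarrow> x = 0) \<and>
     (\<forall>x y. nA (x + y) \<le> max (nA x) (nA y)) \<and>
     (\<forall>x y. nA (x * y) \<le> nA x * nA y) \<and>
     (\<forall>c x. nA (sm c x) = v c * nA x) \<and>
     nA 1 = 1 \<and>
     (\<forall>s. kcauchy nA s \<longrightarrow> (\<exists>l. kconverges nA s l))"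

definition k_banach_space ::
  "('k::field \<Rightarrow> real) \<Rightarrow> ('k \<Rightarrow> 'v::ab_group_add \<Rightarrow> 'v) \<Rightarrow> ('v \<Rightarrow> real) \<Rightarrow> bool" where
  "k_banach_space v sm nV \<longleftrightarrow>
     (\<forall>c x y. sm c (x + y) = sm c x + sm c y) \<and>
     (\<forall>c d x. sm (c + d) x = sm c x + sm d x) \<and>
     (\<forall>c d x. sm (c * d) x = sm c (sm d x)) \<and>
     (\<forall>x. sm 1 x = x) \<and>
     (\<forall>x. 0 \<le> nV x) \<and> (\<forall>x. nV x = 0 \<longleftrightarrow> x = 0) \<and>
     (\<forall>x y. nV (x + y) \<le> max (nV x) (nV y)) \<and>
     (\<forall>c x. nV (sm c x) = v c * nV x) \<and>
     (\<forall>s. kcauchy nV s \<longrightarrow> (\<exists>l. kconverges nV s l))"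

definition nclosed :: "('b \<Rightarrow> real) \<Rightarrow> 'b::ab_group_add set \<Rightarrow> bool" where
  "nclosed nm S \<longleftrightarrow> (\<forall>s l. (\<forall>i. s i \<in> S) \<longrightarrow> kconverges nm s l \<longrightarrow> l \<in> S)"

definition kcont :: "('k::field \<Rightarrow> real) \<Rightarrow> ('x::topological_space \<Rightarrow> 'k) \<Rightarrow> bool" where
  "kcont v f \<longleftrightarrow> (\<forall>x e. 0 < e \<longrightarrow> (\<exists>U. open U \<and> x \<in> U \<and> (\<forall>y\<in>U. v (f y - f x) < e)))"

definition Cbd :: "('k::field \<Rightarrow> real) \<Rightarrow> ('x::topological_space \<Rightarrow> 'k) set" where
  "Cbd v = {f. kcont v f \<and> (\<exists>B. \<forall>x. v (f x) \<le> B)}"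

definition supnorm :: "('k::field \<Rightarrow> real) \<Rightarrow> ('x \<Rightarrow> 'k) \<Rightarrow> real" where
  "supnorm v f = (SUP x. v (f x))"

definition unital_k_alg_hom ::
  "('k::field \<Rightarrow> real) \<Rightarrow> ('k \<Rightarrow> 'a::ring_1 \<Rightarrow> 'a) \<Rightarrow> (('x::topological_space \<Rightarrow> 'k) \<Rightarrow> 'a) \<Rightarrow> bool" where
  "unital_k_alg_hom v sm \<phi> \<longleftrightarrow>
     (\<forall>f\<in>Cbd v. \<forall>g\<in>Cbd v. \<phi> (\<lambda>x. f x + g x) = \<phi> f + \<phi> g \<and> \<phi> (\<lambda>x. f x * g x) = \<phi> f * \<phi> g) \<and>
     (\<forall>f\<in>Cbd v. \<forall>c. \<phi> (\<lambda>x. c * f x) = sm c (\<phi> f)) \<and>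
     \<phi> (\<lambda>x. 1) = 1"

definition sup_continuous_on_Cbd ::
  "('k::field \<Rightarrow> real) \<Rightarrow> ('b::ab_group_add \<Rightarrow> real) \<Rightarrow> (('x::topological_space \<Rightarrow> 'k) \<Rightarrow> 'b) \<Rightarrow> bool" where
  "sup_continuous_on_Cbd v nm \<phi> \<longleftrightarrow>
     (\<forall>f\<in>Cbd v. \<forall>e>0. \<exists>d>0. \<forall>g\<in>Cbd v.
        supnorm v (\<lambda>x. g x - f x) < d \<longrightarrow> nm (\<phi> g - \<phi> f) < e)"

definition Bops :: "('k \<Rightarrow> 'v::ab_group_add \<Rightarrow> 'v) \<Rightarrow> ('v \<Rightarrow> real) \<Rightarrow> ('v \<Rightarrow> 'v) set" where
  "Bops sm nV = {T. (\<forall>x y. T (x + y) = T x + T y) \<and> (\<forall>c x. T (sm c x) = sm c (T x)) \<and>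
                    (\<exists>C. \<forall>x. nV (T x) \<le> C * nV x)}"

definition opnorm :: "('v \<Rightarrow> real) \<Rightarrow> ('v \<Rightarrow> 'v) \<Rightarrow> real" where
  "opnorm nV T = Inf {C. 0 \<le> C \<and> (\<forall>x. nV (T x) \<le> C * nV x)}"

definition unital_k_alg_hom_ops ::
  "('k::field \<Rightarrow> real) \<Rightarrow> ('k \<Rightarrow> 'v::ab_group_add \<Rightarrow> 'v) \<Rightarrow> ('v \<Rightarrow> real)
     \<Rightarrow> (('x::topological_space \<Rightarrow> 'k) \<Rightarrow> ('v \<Rightarrow> 'v)) \<Rightarrow> bool" where
  "unital_k_alg_hom_ops v sm nV \<rho> \<longleftrightarrow>
     (\<forall>f\<in>Cbd v. \<rho> f \<in> Bops sm nV) \<and>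
     (\<forall>f\<in>Cbd v. \<forall>g\<in>Cbd v. \<rho> (\<lambda>x. f x + g x) = (\<lambda>w. \<rho> f w + \<rho> g w) \<and>
                         \<rho> (\<lambda>x. f x * g x) = \<rho> f \<circ> \<rho> g) \<and>
     (\<forall>f\<in>Cbd v. \<forall>c. \<rho> (\<lambda>x. c * f x) = (\<lambda>w. sm c (\<rho> f w))) \<and>
     \<rho> (\<lambda>x. 1) = id"

definition opclosed :: "('v::ab_group_add \<Rightarrow> real) \<Rightarrow> ('v \<Rightarrow> 'v) set \<Rightarrow> bool" where
  "opclosed nV S \<longleftrightarrow> (\<forall>s L. (\<forall>i. s i \<in> S) \<longrightarrow> (\<lambda>i. opnorm nV (\<lambda>w. s i w - L w)) \<longlonglongrightarrow> 0 \<longrightarrow> L \<in> S)"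

end

theory Submission
  imports Defs
begin

text \<open>Transport the norm of the target to \<open>C\<^sub>b\<^sub>d(X,k)\<close>: \<open>N f = \<parallel>\<phi> f\<parallel>\<close> (resp. the
  operator norm of \<open>\<rho> f\<close>) is a complete ultrametric submultiplicative norm, because the map is
  injective with closed image. Such a norm dominates the sup norm: if \<open>N f < \<bar>f x\<^sub>0\<bar>\<close>, then
  \<open>u = f / f x\<^sub>0\<close> has \<open>N u < 1\<close>, so the Neumann series of \<open>u\<close> converges and \<open>1 - u\<close> is
  invertible, contradicting \<open>u x\<^sub>0 = 1\<close>. Hence the identity from \<open>(C\<^sub>b\<^sub>d, N)\<close> to
  \<open>(C\<^sub>b\<^sub>d, sup)\<close> is a continuous bijection of complete spaces, and the open mapping argument
  (Baire category for the sup metric, then successive approximation) bounds \<open>N\<close> by a multiple of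
  the sup norm. Completeness of \<open>k\<close> gives completeness of the sup norm and a nontrivial value
  \<open>0 < \<bar>p\<bar> < 1\<close> allows rescaling.\<close>

locale complete_nonarch_field =
  fixes v :: "'k::field \<Rightarrow> real"
  assumes v_nonneg: "0 \<le> v x"
    and v_eq_0_iff: "v x = 0 \<longleftrightarrow> x = 0"
    and v_mult: "v (x * y) = v x * v y"
    and v_add_le_max: "v (x + y) \<le> max (v x) (v y)"
    and v_nontrivial: "\<exists>p. 0 < v p \<and> v p < 1"
    and v_complete: "kcauchy v s \<Longrightarrow> \<exists>l. kconverges v s l"

lemma local_field_imp_complete_nonarch_field:
  assumes "local_field v" shows "complete_nonarch_field v"
proof -
  note lf = assms[unfolded local_field_def]
  obtain p where "0 < v p" "v p < 1" using lf by (elim conjE exE) blast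
  then show ?thesis using lf by unfold_locales auto
qed

lemma ultrametric_limit_le:
  fixes nm :: "'b::ab_group_add \<Rightarrow> real"
  assumes ultra: "\<And>x y. nm (x + y) \<le> max (nm x) (nm y)"
    and nonneg: "\<And>x. 0 \<le> nm x"
    and lim: "(\<lambda>m. nm (s m - l)) \<longlonglongrightarrow> 0"
    and close: "\<And>m. M \<le> m \<Longrightarrow> nm (s n - s m) \<le> e"
  shows "nm (s n - l) \<le> e"
proof -
  have "0 \<le> e" using close[of M] nonneg order_trans by blast
  have "nm (s n - l) \<le> max e (nm (s m - l))" if "M \<le> m" for m
    using ultra[of "s n - s m" "s m - l"] close[OF that] by (auto simp: le_max_iff_disj intro: order_trans)
  moreover have "(\<lambda>m. max e (nm (s m - l))) \<longlonglongrightarrow> max e 0"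
    by (intro tendsto_max tendsto_const lim)
  ultimately have "nm (s n - l) \<le> max e 0"
    by (intro LIMSEQ_le_const[where X = "\<lambda>m. max e (nm (s m - l))"]) auto
  with \<open>0 \<le> e\<close> show ?thesis by simp
qed

lemma le_0_if_le_geometric:
  fixes a C x :: real
  assumes "0 \<le> a" "a < 1" and le: "\<And>n. x \<le> C * a ^ n"
  shows "x \<le> 0"
proof -
  have "(\<lambda>n. C * a ^ n) \<longlonglongrightarrow> C * 0"
    using assms by (intro tendsto_mult tendsto_const LIMSEQ_power_zero) auto
  then show ?thesis using le by (intro LIMSEQ_le_const[where X = "\<lambda>n. C * a ^ n"]) auto
qed

lemma exists_power_int_between:
  fixes q y :: real
  assumes q: "0 < q" "q < 1" and "0 < y"
  obtains k :: int where "y < q powi k" "q powi k \<le> y / q"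
proof
  define L where "L = log q y"
  define k where "k = \<lceil>L\<rceil> - 1"
  have y: "q powr L = y" unfolding L_def using assms by simp
  have powi: "q powi j = q powr real_of_int j" for j using q by (simp add: powr_real_of_int')
  show "y < q powi k"
    unfolding powi y[symmetric] k_def using q by (intro powr_less_mono') linarith+
  have "q powi k * q = q powr real_of_int (k + 1)" using q by (simp add: powi powr_add)
  also have "\<dots> \<le> y" unfolding y[symmetric] k_def using q by (intro powr_mono') auto
  finally show "q powi k \<le> y / q" using q by (simp add: pos_le_divide_eq)
qed

context complete_nonarch_field
begin

lemma v_0 [simp]: "v 0 = 0"
  by (simp add: v_eq_0_iff)

lemma v_1 [simp]: "v 1 = 1"
proof -
  have "v 1 * v 1 = v 1 * 1" using v_mult[of 1 1] by simp
  then show ?thesis using v_eq_0_iff[of 1] by (subst (asm) mult_left_cancel) auto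
qed

lemma v_uminus [simp]: "v (- x) = v x"
proof -
  have "v (-1) * v (-1) = 1" using v_mult[of "-1" "-1"] by simp
  then have "(v (-1) - 1) * (v (-1) + 1) = 0" by (simp add: algebra_simps)
  then have "v (-1) = 1" using v_nonneg[of "-1"] by simp
  then show ?thesis using v_mult[of "-1" x] by simp
qed

lemma v_minus_commute: "v (x - y) = v (y - x)"
  using v_uminus[of "x - y"] by simp

lemma v_diff_le_max: "v (x - z) \<le> max (v (x - y)) (v (y - z))"
  using v_add_le_max[of "x - y" "y - z"] by simp

lemma v_inverse: "v (inverse x) = inverse (v x)"
proof (cases "x = 0")
  case False
  then have "v x * v (inverse x) = 1" by (simp flip: v_mult)
  then show ?thesis by (rule inverse_unique[symmetric])
qed simp

lemma v_power: "v (x ^ n) = v x ^ n"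
  by (induction n) (simp_all add: v_mult)

lemma v_power_int: "v (x powi n) = v x powi n"
  by (simp add: power_int_def v_power v_inverse power_inverse)

lemma v_pos_iff: "0 < v x \<longleftrightarrow> x \<noteq> 0"
  using v_nonneg[of x] v_eq_0_iff[of x] by linarith

lemma Cbd_iff: "f \<in> Cbd v \<longleftrightarrow> kcont v f \<and> (\<exists>B. \<forall>x. v (f x) \<le> B)"
  by (simp add: Cbd_def)

lemma Cbd_bound:
  assumes "f \<in> Cbd v"
  obtains B where "0 \<le> B" "\<And>x. v (f x) \<le> B"
proof -
  obtain B where "\<forall>x. v (f x) \<le> B" using assms Cbd_iff by blast
  then show ?thesis using that[of "max B 0"] by (auto intro: le_max_iff_disj[THEN iffD2])
qed

lemma Cbd_kcontD:
  assumes "f \<in> Cbd v" "0 < e"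
  obtains U where "open U" "x \<in> U" "\<And>y. y \<in> U \<Longrightarrow> v (f y - f x) < e"
  using assms unfolding Cbd_iff kcont_def by blast

lemma Cbd_const: "(\<lambda>x. c) \<in> Cbd v"
  unfolding Cbd_iff kcont_def by (auto intro: exI[of _ UNIV])

lemma Cbd_add:
  assumes f: "f \<in> Cbd v" and g: "g \<in> Cbd v"
  shows "(\<lambda>x. f x + g x) \<in> Cbd v"
  unfolding Cbd_iff kcont_def
proof (intro conjI allI impI)
  obtain Bf Bg where "\<And>x. v (f x) \<le> Bf" "\<And>x. v (g x) \<le> Bg" using Cbd_bound f g by metis
  then have "\<forall>x. v (f x + g x) \<le> max Bf Bg" by (meson max.mono order_trans v_add_le_max)
  then show "\<exists>B. \<forall>x. v (f x + g x) \<le> B" by blast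
next
  fix x and e :: real assume "0 < e"
  then obtain U1 U2 where U: "open U1" "x \<in> U1" "\<And>y. y \<in> U1 \<Longrightarrow> v (f y - f x) < e"
    "open U2" "x \<in> U2" "\<And>y. y \<in> U2 \<Longrightarrow> v (g y - g x) < e"
    using Cbd_kcontD f g by metis
  have "v (f y + g y - (f x + g x)) < e" if "y \<in> U1 \<inter> U2" for y
  proof -
    have "f y + g y - (f x + g x) = (f y - f x) + (g y - g x)" by simp
    then show ?thesis using v_add_le_max[of "f y - f x" "g y - g x"] U that
      by (metis IntD1 IntD2 max_less_iff_conj order_le_less_trans)
  qed
  then show "\<exists>U. open U \<and> x \<in> U \<and> (\<forall>y\<in>U. v (f y + g y - (f x + g x)) < e)"
    using U by (intro exI[of _ "U1 \<inter> U2"]) auto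
qed

lemma Cbd_mult:
  assumes f: "f \<in> Cbd v" and g: "g \<in> Cbd v"
  shows "(\<lambda>x. f x * g x) \<in> Cbd v"
  unfolding Cbd_iff kcont_def
proof (intro conjI allI impI)
  obtain Bf Bg where B: "0 \<le> Bf" "\<And>x. v (f x) \<le> Bf" "0 \<le> Bg" "\<And>x. v (g x) \<le> Bg"
    using Cbd_bound f g by metis
  then have "\<forall>x. v (f x * g x) \<le> Bf * Bg" by (simp add: v_mult mult_mono v_nonneg)
  then show "\<exists>B. \<forall>x. v (f x * g x) \<le> B" by blast
  fix x and e :: real assume "0 < e"
  then obtain U1 U2 where U: "open U1" "x \<in> U1" "\<And>y. y \<in> U1 \<Longrightarrow> v (f y - f x) < e / (Bg + 1)"
    "open U2" "x \<in> U2" "\<And>y. y \<in> U2 \<Longrightarrow> v (g y - g x) < e / (Bf + 1)"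
    using Cbd_kcontD[OF f, of "e / (Bg + 1)"] Cbd_kcontD[OF g, of "e / (Bf + 1)"] B by (metis add_nonneg_pos divide_pos_pos zero_less_one)
  have "v (f y * g y - f x * g x) < e" if y: "y \<in> U1 \<inter> U2" for y
  proof -
    have "v (f y) * v (g y - g x) \<le> Bf * (e / (Bf + 1))"
      using B U y by (intro mult_mono) (auto simp: v_nonneg less_imp_le)
    also have "\<dots> < e" using B \<open>0 < e\<close> by (simp add: field_simps)
    finally have 1: "v (f y * (g y - g x)) < e" by (simp add: v_mult)
    have "v (f y - f x) * v (g x) \<le> (e / (Bg + 1)) * Bg"
      using B U y \<open>0 < e\<close> by (intro mult_mono) (auto simp: v_nonneg less_imp_le)
    also have "\<dots> < e" using B \<open>0 < e\<close> by (simp add: field_simps)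
    finally have 2: "v ((f y - f x) * g x) < e" by (simp add: v_mult)
    have "f y * g y - f x * g x = f y * (g y - g x) + (f y - f x) * g x"
      by (simp add: algebra_simps)
    then show ?thesis using v_add_le_max[of "f y * (g y - g x)"] 1 2 by (metis max_less_iff_conj order_le_less_trans)
  qed
  then show "\<exists>U. open U \<and> x \<in> U \<and> (\<forall>y\<in>U. v (f y * g y - f x * g x) < e)"
    using U by (intro exI[of _ "U1 \<inter> U2"]) auto
qed

lemma Cbd_smult: "f \<in> Cbd v \<Longrightarrow> (\<lambda>x. c * f x) \<in> Cbd v"
  using Cbd_mult[OF Cbd_const] by blast

lemma Cbd_uminus: "f \<in> Cbd v \<Longrightarrow> (\<lambda>x. - f x) \<in> Cbd v"
  using Cbd_smult[of f "-1"] by simp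

lemma Cbd_diff: "f \<in> Cbd v \<Longrightarrow> g \<in> Cbd v \<Longrightarrow> (\<lambda>x. f x - g x) \<in> Cbd v"
  using Cbd_add[OF _ Cbd_uminus, of f g] by simp

lemma Cbd_power: "f \<in> Cbd v \<Longrightarrow> (\<lambda>x. f x ^ n) \<in> Cbd v"
  by (induction n) (auto intro: Cbd_const Cbd_mult)

lemma Cbd_sum: "(\<And>j. j \<in> A \<Longrightarrow> f j \<in> Cbd v) \<Longrightarrow> (\<lambda>x. \<Sum>j\<in>A. f j x) \<in> Cbd v"
  by (induction A rule: infinite_finite_induct) (auto intro: Cbd_const Cbd_add)

lemma Cbd_uniform_limit:
  assumes approx: "\<And>e. 0 < e \<Longrightarrow> \<exists>g\<in>Cbd v. \<forall>x. v (g x - l x) < e"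
  shows "l \<in> Cbd v"
  unfolding Cbd_iff kcont_def
proof (intro conjI allI impI)
  obtain g B where "g \<in> Cbd v" "\<And>x. v (g x - l x) < 1" "\<And>x. v (g x) \<le> B"
    using approx[of 1] Cbd_bound by (metis zero_less_one)
  then have "v (l x) \<le> max 1 B" for x
    using v_add_le_max[of "l x - g x" "g x"] v_minus_commute[of "l x" "g x"]
    by (metis diff_add_cancel max.mono less_imp_le order_trans)
  then show "\<exists>B. \<forall>x. v (l x) \<le> B" by blast
next
  fix x and e :: real assume "0 < e"
  then obtain g where g: "g \<in> Cbd v" "\<And>x. v (g x - l x) < e" using approx by blast
  then obtain U where U: "open U" "x \<in> U" "\<And>y. y \<in> U \<Longrightarrow> v (g y - g x) < e"
    using Cbd_kcontD \<open>0 < e\<close> by metis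
  have "v (l y - l x) < e" if "y \<in> U" for y
  proof -
    have "v (l y - l x) \<le> max (v (l y - g y)) (max (v (g y - g x)) (v (g x - l x)))"
      by (meson max.mono order_refl order_trans v_diff_le_max)
    then show ?thesis using g(2)[of y] g(2)[of x] U(3)[OF that] v_minus_commute[of "l y" "g y"] by simp
  qed
  then show "\<exists>U. open U \<and> x \<in> U \<and> (\<forall>y\<in>U. v (l y - l x) < e)" using U by blast
qed

lemma supnorm_upper:
  assumes "f \<in> Cbd v" shows "v (f x) \<le> supnorm v f"
proof -
  obtain B where "\<And>x. v (f x) \<le> B" using Cbd_bound assms by blast
  then show ?thesis unfolding supnorm_def by (intro cSUP_upper bdd_aboveI2) auto
qed

lemma supnorm_least: "(\<And>x. v (f x) \<le> B) \<Longrightarrow> supnorm v f \<le> B"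
  unfolding supnorm_def by (rule cSUP_least) auto

lemma supnorm_nonneg: "f \<in> Cbd v \<Longrightarrow> 0 \<le> supnorm v f"
  using supnorm_upper v_nonneg order_trans by blast

lemma supnorm_zero [simp]: "supnorm v (\<lambda>x. 0) = 0"
  by (simp add: supnorm_def)

lemma supnorm_eq_0D:
  assumes "f \<in> Cbd v" "supnorm v f \<le> 0"
  shows "f = (\<lambda>x. 0)"
proof
  fix x
  have "v (f x) \<le> 0" using assms supnorm_upper order_trans by blast
  then show "f x = 0" using v_nonneg v_eq_0_iff by (meson antisym)
qed

lemma supnorm_add_le:
  "f \<in> Cbd v \<Longrightarrow> g \<in> Cbd v \<Longrightarrow> supnorm v (\<lambda>x. f x + g x) \<le> max (supnorm v f) (supnorm v g)"
  by (rule supnorm_least) (meson max.mono order_trans supnorm_upper v_add_le_max)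

lemma supnorm_diff_le_max:
  assumes "f \<in> Cbd v" "g \<in> Cbd v" "h \<in> Cbd v"
  shows "supnorm v (\<lambda>x. f x - h x) \<le> max (supnorm v (\<lambda>x. f x - g x)) (supnorm v (\<lambda>x. g x - h x))"
  using supnorm_add_le[OF Cbd_diff[OF assms(1,2)] Cbd_diff[OF assms(2,3)]] by simp

lemma supnorm_diff_commute: "supnorm v (\<lambda>x. f x - g x) = supnorm v (\<lambda>x. g x - f x)"
  unfolding supnorm_def by (simp only: v_minus_commute)

lemma supnorm_smult_le: "f \<in> Cbd v \<Longrightarrow> supnorm v (\<lambda>x. c * f x) \<le> v c * supnorm v f"
  by (rule supnorm_least) (simp add: v_mult mult_left_mono supnorm_upper v_nonneg)

lemma supnorm_smult:
  assumes "f \<in> Cbd v"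
  shows "supnorm v (\<lambda>x. c * f x) = v c * supnorm v f"
proof (cases "c = 0")
  case False
  have "supnorm v f \<le> inverse (v c) * supnorm v (\<lambda>x. c * f x)"
    using supnorm_smult_le[of "\<lambda>x. c * f x" "inverse c"] Cbd_smult[OF assms] False
    by (simp add: mult.assoc[symmetric] v_inverse)
  then have "v c * supnorm v f \<le> supnorm v (\<lambda>x. c * f x)"
    using v_pos_iff[of c] False by (simp add: field_simps)
  then show ?thesis using supnorm_smult_le[OF assms] by (intro antisym)
qed simp

text \<open>The absolute value only matters outside \<open>Cbd v\<close>, where \<open>supnorm\<close> is the supremum of an
  unbounded set and hence an unspecified real.\<close>
definition sup_dist :: "('x::topological_space \<Rightarrow> 'k) \<Rightarrow> ('x \<Rightarrow> 'k) \<Rightarrow> real" where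
  "sup_dist f g = \<bar>supnorm v (\<lambda>x. f x - g x)\<bar>"

lemma sup_dist_Cbd: "f \<in> Cbd v \<Longrightarrow> g \<in> Cbd v \<Longrightarrow> sup_dist f g = supnorm v (\<lambda>x. f x - g x)"
  by (simp add: sup_dist_def supnorm_nonneg Cbd_diff)

lemma Metric_space_sup_dist: "Metric_space (Cbd v) sup_dist"
proof
  fix f g h :: "'x::topological_space \<Rightarrow> 'k"
  show "0 \<le> sup_dist f g" by (simp add: sup_dist_def)
  show "sup_dist f g = sup_dist g f" unfolding sup_dist_def supnorm_diff_commute[of f g] ..
  assume f: "f \<in> Cbd v" and g: "g \<in> Cbd v"
  show "sup_dist f g = 0 \<longleftrightarrow> f = g"
  proof
    assume "sup_dist f g = 0"
    then have "(\<lambda>x. f x - g x) = (\<lambda>x. 0)" using supnorm_eq_0D[OF Cbd_diff[OF f g]] f g by (simp add: sup_dist_Cbd)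
    then show "f = g" by (simp add: fun_eq_iff)
  qed (simp add: sup_dist_def)
  assume h: "h \<in> Cbd v"
  show "sup_dist f h \<le> sup_dist f g + sup_dist g h"
    using supnorm_diff_le_max[OF f g h] supnorm_nonneg[OF Cbd_diff[OF f g]] supnorm_nonneg[OF Cbd_diff[OF g h]]
    by (auto simp: sup_dist_Cbd f g h max_def split: if_splits)
qed

lemma sup_Cauchy_imp_uniform_limit:
  fixes s :: "nat \<Rightarrow> 'x::topological_space \<Rightarrow> 'k"
  assumes s: "\<And>n. s n \<in> Cbd v"
    and Cauchy: "\<And>e. 0 < e \<Longrightarrow> \<exists>M. \<forall>m\<ge>M. \<forall>n\<ge>M. supnorm v (\<lambda>x. s m x - s n x) < e"
  obtains l where "l \<in> Cbd v" "\<And>e. 0 < e \<Longrightarrow> \<exists>M. \<forall>n\<ge>M. supnorm v (\<lambda>x. s n x - l x) \<le> e"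
proof -
  have pointwise: "v (s m x - s n x) \<le> supnorm v (\<lambda>x. s m x - s n x)" for m n x
    using supnorm_upper[OF Cbd_diff[OF s s]] by simp
  have "kcauchy v (\<lambda>n. s n x)" for x
    unfolding kcauchy_def
  proof (intro allI impI)
    fix e :: real assume "0 < e"
    then obtain M where "\<forall>m\<ge>M. \<forall>n\<ge>M. supnorm v (\<lambda>x. s m x - s n x) < e" using Cauchy by blast
    then show "\<exists>N. \<forall>m\<ge>N. \<forall>n\<ge>N. v (s m x - s n x) < e" using pointwise le_less_trans by blast
  qed
  then have "\<forall>x. \<exists>l. kconverges v (\<lambda>n. s n x) l" using v_complete by blast
  then obtain l where l: "\<And>x. kconverges v (\<lambda>n. s n x) (l x)" by metis
  have uniform: "\<exists>M. \<forall>n\<ge>M. \<forall>x. v (s n x - l x) \<le> e" if "0 < e" for e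
  proof -
    obtain M where M: "\<forall>m\<ge>M. \<forall>n\<ge>M. supnorm v (\<lambda>x. s m x - s n x) < e" using Cauchy \<open>0 < e\<close> by blast
    have "v (s n x - l x) \<le> e" if "M \<le> n" for n x
    proof (rule ultrametric_limit_le[where nm = v and M = M])
      show "(\<lambda>m. v (s m x - l x)) \<longlonglongrightarrow> 0" using l[of x] by (simp add: kconverges_def)
      show "v (s n x - s m x) \<le> e" if "M \<le> m" for m
        using M pointwise[of n x m] \<open>M \<le> n\<close> that by (meson less_imp_le order_trans)
    qed (simp_all add: v_add_le_max v_nonneg)
    then show ?thesis by blast
  qed
  have "l \<in> Cbd v"
  proof (rule Cbd_uniform_limit)
    fix e :: real assume "0 < e"
    then obtain M where M: "\<forall>n\<ge>M. \<forall>x. v (s n x - l x) \<le> e / 2" using uniform[of "e / 2"] by auto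
    have "v (s M x - l x) < e" for x using M[rule_format, of M x] \<open>0 < e\<close> by linarith
    then show "\<exists>g\<in>Cbd v. \<forall>x. v (g x - l x) < e" using s by blast
  qed
  moreover have "\<exists>M. \<forall>n\<ge>M. supnorm v (\<lambda>x. s n x - l x) \<le> e" if "0 < e" for e
    using uniform[OF that] by (meson supnorm_least)
  ultimately show ?thesis using that by blast
qed

lemma mcomplete_sup_dist: "Metric_space.mcomplete (Cbd v) (sup_dist :: ('x::topological_space \<Rightarrow> 'k) \<Rightarrow> _)"
proof -
  interpret Metric_space "Cbd v" "sup_dist :: ('x \<Rightarrow> 'k) \<Rightarrow> _" by (rule Metric_space_sup_dist)
  show ?thesis unfolding mcomplete_def
  proof (intro allI impI)
    fix s :: "nat \<Rightarrow> 'x \<Rightarrow> 'k" assume "MCauchy s"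
    then have s: "s n \<in> Cbd v"
      and Cauchy: "\<And>e. 0 < e \<Longrightarrow> \<exists>M. \<forall>m\<ge>M. \<forall>n\<ge>M. supnorm v (\<lambda>x. s m x - s n x) < e" for n
      by (auto simp: MCauchy_def sup_dist_Cbd image_subset_iff)
    obtain l where l: "l \<in> Cbd v" and conv: "\<And>e. 0 < e \<Longrightarrow> \<exists>M. \<forall>n\<ge>M. supnorm v (\<lambda>x. s n x - l x) \<le> e"
      using sup_Cauchy_imp_uniform_limit[of s, OF s Cauchy] by blast
    have "\<exists>M. \<forall>n\<ge>M. sup_dist (s n) l < e" if "0 < e" for e
    proof -
      obtain M where "\<forall>n\<ge>M. supnorm v (\<lambda>x. s n x - l x) \<le> e / 2" using conv[of "e / 2"] \<open>0 < e\<close> by auto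
      then have "sup_dist (s n) l < e" if "M \<le> n" for n using that \<open>0 < e\<close> s l by (fastforce simp: sup_dist_Cbd)
      then show ?thesis by blast
    qed
    then have "limitin mtopology s l sequentially"
      unfolding limit_metric_sequentially using s l by simp
    then show "\<exists>l. limitin mtopology s l sequentially" by (rule exI[of _ l])
  qed
qed

end

locale complete_algebra_norm = complete_nonarch_field v for v :: "'k::field \<Rightarrow> real" +
  fixes N :: "('x::topological_space \<Rightarrow> 'k) \<Rightarrow> real"
  assumes N_nonneg: "f \<in> Cbd v \<Longrightarrow> 0 \<le> N f"
    and N_eq_0D: "f \<in> Cbd v \<Longrightarrow> N f = 0 \<Longrightarrow> f = (\<lambda>x. 0)"
    and N_add_le_max: "f \<in> Cbd v \<Longrightarrow> g \<in> Cbd v \<Longrightarrow> N (\<lambda>x. f x + g x) \<le> max (N f) (N g)"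
    and N_smult: "f \<in> Cbd v \<Longrightarrow> N (\<lambda>x. c * f x) = v c * N f"
    and N_mult_le: "f \<in> Cbd v \<Longrightarrow> g \<in> Cbd v \<Longrightarrow> N (\<lambda>x. f x * g x) \<le> N f * N g"
    and N_complete: "(\<And>i::nat. s i \<in> Cbd v) \<Longrightarrow>
       (\<And>e. 0 < e \<Longrightarrow> \<exists>M. \<forall>m\<ge>M. \<forall>n\<ge>M. N (\<lambda>x. s m x - s n x) < e) \<Longrightarrow>
       \<exists>l\<in>Cbd v. \<forall>e>0. \<exists>M. \<forall>n\<ge>M. N (\<lambda>x. s n x - l x) < e"
begin

lemma N_zero [simp]: "N (\<lambda>x. 0) = 0"
  using N_smult[OF Cbd_const, of 0 0] by simp

lemma N_uminus: "f \<in> Cbd v \<Longrightarrow> N (\<lambda>x. - f x) = N f"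
  using N_smult[of f "-1"] by simp

lemma N_diff_commute: "f \<in> Cbd v \<Longrightarrow> g \<in> Cbd v \<Longrightarrow> N (\<lambda>x. f x - g x) = N (\<lambda>x. g x - f x)"
  using N_uminus[OF Cbd_diff, of f g] by simp

lemma N_diff_le_max:
  assumes "f \<in> Cbd v" "g \<in> Cbd v" "h \<in> Cbd v"
  shows "N (\<lambda>x. f x - h x) \<le> max (N (\<lambda>x. f x - g x)) (N (\<lambda>x. g x - h x))"
  using N_add_le_max[OF Cbd_diff[OF assms(1,2)] Cbd_diff[OF assms(2,3)]] by simp

lemma N_power_le: "f \<in> Cbd v \<Longrightarrow> N (\<lambda>x. f x ^ n) \<le> N (\<lambda>x. 1) * N f ^ n"
proof (induction n)
  case (Suc n)
  have "N (\<lambda>x. f x * f x ^ n) \<le> N f * N (\<lambda>x. f x ^ n)"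
    by (rule N_mult_le[OF Suc.prems Cbd_power[OF Suc.prems]])
  also have "\<dots> \<le> N f * (N (\<lambda>x. 1) * N f ^ n)"
    by (rule mult_left_mono[OF Suc.IH[OF Suc.prems] N_nonneg[OF Suc.prems]])
  finally show ?case by (simp add: algebra_simps)
qed simp

lemma N_geometric_tail:
  assumes s: "\<And>n. s n \<in> Cbd v" and "0 \<le> B" "0 \<le> a" "a < 1"
    and step: "\<And>n. N (\<lambda>x. s (Suc n) x - s n x) \<le> B * a ^ n"
    and "n \<le> m"
  shows "N (\<lambda>x. s m x - s n x) \<le> B * a ^ n"
  using \<open>n \<le> m\<close>
proof (induction m rule: dec_induct)
  case (step m)
  have "N (\<lambda>x. s (Suc m) x - s n x) \<le> max (N (\<lambda>x. s (Suc m) x - s m x)) (N (\<lambda>x. s m x - s n x))"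
    by (rule N_diff_le_max[OF s s s])
  moreover have "B * a ^ m \<le> B * a ^ n"
    using \<open>n \<le> m\<close> assms by (intro mult_left_mono power_decreasing) auto
  ultimately show ?case using step.IH assms(5)[of m] by simp
qed (simp add: assms)

lemma N_geometric_limit:
  assumes s: "\<And>n. s n \<in> Cbd v" and "0 \<le> B" "0 \<le> a" "a < 1"
    and step: "\<And>n. N (\<lambda>x. s (Suc n) x - s n x) \<le> B * a ^ n"
  obtains l where "l \<in> Cbd v" "\<And>n. N (\<lambda>x. l x - s n x) \<le> B * a ^ n"
proof -
  note tail = N_geometric_tail[OF assms]
  have "\<exists>M. \<forall>m\<ge>M. \<forall>n\<ge>M. N (\<lambda>x. s m x - s n x) < e" if "0 < e" for e
  proof -
    have "\<not> (\<forall>n. e \<le> B * a ^ n)"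
      using le_0_if_le_geometric[OF \<open>0 \<le> a\<close> \<open>a < 1\<close>, of e B] \<open>0 < e\<close> by force
    then obtain M where M: "B * a ^ M < e" by (auto simp: not_le)
    have mono: "B * a ^ n \<le> B * a ^ M" if "M \<le> n" for n
      using that assms by (intro mult_left_mono power_decreasing) auto
    have "N (\<lambda>x. s m x - s n x) < e" if "M \<le> m" "M \<le> n" for m n
    proof (cases "n \<le> m")
      case True
      then show ?thesis using tail[of n m] mono[of n] M that by linarith
    next
      case False
      then show ?thesis using tail[of m n] mono[of m] M that N_diff_commute[OF s s, of m n] by linarith
    qed
    then show ?thesis by blast
  qed
  from N_complete[OF s this] obtain l
    where l: "l \<in> Cbd v" "\<forall>e>0. \<exists>M. \<forall>m\<ge>M. N (\<lambda>x. s m x - l x) < e" by blast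
  have "N (\<lambda>x. l x - s n x) \<le> B * a ^ n" for n
  proof (rule ccontr)
    assume "\<not> ?thesis"
    then have gt: "B * a ^ n < N (\<lambda>x. l x - s n x)" by simp
    moreover have "0 \<le> B * a ^ n" using assms by simp
    ultimately obtain M where M: "\<forall>m\<ge>M. N (\<lambda>x. s m x - l x) < N (\<lambda>x. l x - s n x)"
      using l(2) by (meson le_less_trans)
    define m where "m = max M n"
    have "N (\<lambda>x. l x - s n x) \<le> max (N (\<lambda>x. l x - s m x)) (N (\<lambda>x. s m x - s n x))"
      by (rule N_diff_le_max[OF l(1) s s])
    moreover have "N (\<lambda>x. l x - s m x) < N (\<lambda>x. l x - s n x)"
      using M N_diff_commute[OF l(1) s] by (simp add: m_def)
    moreover have "N (\<lambda>x. s m x - s n x) < N (\<lambda>x. l x - s n x)"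
      using tail[of n m] gt by (simp add: m_def)
    ultimately show False by simp
  qed
  with l(1) show ?thesis using that by blast
qed

lemma N_one_minus_invertible:
  assumes u: "u \<in> Cbd v" and small: "N u < 1"
  obtains G where "G \<in> Cbd v" "\<And>x. (1 - u x) * G x = 1"
proof -
  define K where "K = N (\<lambda>x. 1)"
  define g where "g n x = (\<Sum>j<n. u x ^ j)" for n x
  have g: "g n \<in> Cbd v" for n unfolding g_def by (intro Cbd_sum Cbd_power u)
  have step: "N (\<lambda>x. g (Suc n) x - g n x) \<le> K * N u ^ n" for n
    using N_power_le[OF u, of n] by (simp add: g_def K_def)
  have "0 \<le> K" unfolding K_def by (rule N_nonneg[OF Cbd_const])
  then obtain G where G: "G \<in> Cbd v" and conv: "\<And>n. N (\<lambda>x. G x - g n x) \<le> K * N u ^ n"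
    using N_geometric_limit[OF g _ N_nonneg[OF u] small step] by blast
  define h where "h x = (1 - u x) * G x - 1" for x
  define Q where "Q = N (\<lambda>x. 1 - u x)"
  have one_minus_u: "(\<lambda>x. 1 - u x) \<in> Cbd v" by (intro Cbd_diff Cbd_const u)
  have h: "h \<in> Cbd v" unfolding h_def by (intro Cbd_diff Cbd_mult one_minus_u G Cbd_const)
  have "N h \<le> max Q 1 * K * N u ^ n" for n
  proof -
    have geometric: "(1 - u x) * g n x = 1 - u x ^ n" for x
      by (simp add: g_def one_diff_power_eq)
    have "h = (\<lambda>x. (1 - u x) * (G x - g n x) + - (u x ^ n))"
      by (rule ext) (simp add: h_def right_diff_distrib geometric)
    then have "N h \<le> max (N (\<lambda>x. (1 - u x) * (G x - g n x))) (N (\<lambda>x. - (u x ^ n)))"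
      using N_add_le_max[OF Cbd_mult[OF one_minus_u Cbd_diff[OF G g]] Cbd_uminus[OF Cbd_power[OF u]]]
      by simp
    also have "\<dots> \<le> max (Q * N (\<lambda>x. G x - g n x)) (N (\<lambda>x. u x ^ n))"
      unfolding N_uminus[OF Cbd_power[OF u]] Q_def
      by (intro max.mono N_mult_le[OF one_minus_u Cbd_diff[OF G g]] order_refl)
    also have "\<dots> \<le> max (Q * (K * N u ^ n)) (K * N u ^ n)"
      using conv N_power_le[OF u, of n] N_nonneg[OF one_minus_u]
      by (intro max.mono mult_left_mono) (simp_all add: Q_def K_def)
    also have "\<dots> = max Q 1 * K * N u ^ n"
      using N_nonneg[OF Cbd_const, of 1] N_nonneg[OF u] by (simp add: max_mult_distrib_right K_def)
    finally show ?thesis .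
  qed
  then have "N h \<le> 0"
    by (intro le_0_if_le_geometric[of "N u" "N h" "max Q 1 * K"]) (auto simp: N_nonneg u small mult.assoc)
  then have "h = (\<lambda>x. 0)" using N_eq_0D[OF h] N_nonneg[OF h] by simp
  then have "(1 - u x) * G x = 1" for x by (simp add: h_def fun_eq_iff)
  with G show ?thesis using that by blast
qed

lemma supnorm_le_N:
  assumes f: "f \<in> Cbd v"
  shows "supnorm v f \<le> N f"
proof (rule supnorm_least, rule ccontr)
  fix x0 assume "\<not> v (f x0) \<le> N f"
  then have less: "N f < v (f x0)" by simp
  then have "f x0 \<noteq> 0" using N_nonneg[OF f] by auto
  define u where "u x = inverse (f x0) * f x" for x
  have u: "u \<in> Cbd v" unfolding u_def by (rule Cbd_smult[OF f])
  have "N u = N f / v (f x0)"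
    unfolding u_def N_smult[OF f] by (simp add: v_inverse divide_inverse)
  then have "N u < 1" using less \<open>f x0 \<noteq> 0\<close> v_pos_iff by simp
  then obtain G where "\<And>x. (1 - u x) * G x = 1" using N_one_minus_invertible[OF u] by blast
  from this[of x0] show False using \<open>f x0 \<noteq> 0\<close> by (simp add: u_def)
qed

definition N_ball_dense_in_sup_ball :: "real \<Rightarrow> real \<Rightarrow> bool" where
  "N_ball_dense_in_sup_ball r M \<longleftrightarrow>
     (\<forall>h\<in>Cbd v. supnorm v h < r \<longrightarrow>
        (\<forall>e>0. \<exists>g\<in>Cbd v. N g \<le> M \<and> supnorm v (\<lambda>x. h x - g x) < e))"

lemma N_ball_dense_in_sup_ball_if_dense_near:
  assumes f0: "f0 \<in> Cbd v" and "0 < r"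
    and near: "\<And>h e. h \<in> Cbd v \<Longrightarrow> supnorm v (\<lambda>x. f0 x - h x) < r \<Longrightarrow> 0 < e \<Longrightarrow>
      \<exists>g\<in>Cbd v. N g \<le> M \<and> supnorm v (\<lambda>x. h x - g x) < e"
  shows "N_ball_dense_in_sup_ball r M"
  unfolding N_ball_dense_in_sup_ball_def
proof (intro ballI impI allI)
  fix h :: "'x \<Rightarrow> 'k" and e :: real
  assume h: "h \<in> Cbd v" "supnorm v h < r" and "0 < e"
  have "supnorm v (\<lambda>x. f0 x - (f0 x + h x)) < r" using h by (simp add: supnorm_def)
  then obtain g1 where g1: "g1 \<in> Cbd v" "N g1 \<le> M" "supnorm v (\<lambda>x. f0 x + h x - g1 x) < e"
    using near[OF Cbd_add[OF f0 h(1)] _ \<open>0 < e\<close>] by blast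
  obtain g2 where g2: "g2 \<in> Cbd v" "N g2 \<le> M" "supnorm v (\<lambda>x. f0 x - g2 x) < e"
    using near[OF f0 _ \<open>0 < e\<close>] \<open>0 < r\<close> by auto
  have "N (\<lambda>x. g1 x - g2 x) \<le> M"
    using N_add_le_max[OF g1(1) Cbd_uminus[OF g2(1)]] N_uminus[OF g2(1)] g1 g2 by simp
  moreover have "supnorm v (\<lambda>x. h x - (g1 x - g2 x)) < e"
    using supnorm_diff_le_max[OF Cbd_add[OF f0 h(1)] g1(1) Cbd_add[OF f0 Cbd_diff[OF g1(1) g2(1)]]]
      supnorm_diff_commute[of f0 g2] g1 g2 by (simp add: algebra_simps)
  ultimately show "\<exists>g\<in>Cbd v. N g \<le> M \<and> supnorm v (\<lambda>x. h x - g x) < e"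
    using Cbd_diff[OF g1(1) g2(1)] by blast
qed

lemma exists_N_ball_dense_in_sup_ball:
  obtains r M where "0 < r" "0 \<le> M" "N_ball_dense_in_sup_ball r M"
proof -
  interpret Metric_space "Cbd v" "sup_dist :: ('x \<Rightarrow> 'k) \<Rightarrow> _" by (rule Metric_space_sup_dist)
  define T where "T n = mtopology closure_of {g \<in> Cbd v. N g \<le> real n}" for n :: nat
  have closed: "closedin mtopology (T n)" for n unfolding T_def by simp
  have "\<Union>(range T) = Cbd v"
  proof
    show "\<Union>(range T) \<subseteq> Cbd v" unfolding T_def using closure_of_subset_topspace by fastforce
    show "Cbd v \<subseteq> \<Union>(range T)"
    proof
      fix f :: "'x \<Rightarrow> 'k" assume f: "f \<in> Cbd v"
      obtain n :: nat where "N f \<le> real n" using real_arch_simple by blast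
      then have "f \<in> T n" unfolding T_def using f by (intro closure_of_subset[THEN subsetD]) auto
      then show "f \<in> \<Union>(range T)" by blast
    qed
  qed
  moreover have "mtopology interior_of Cbd v \<noteq> {}"
    using interior_of_topspace[of mtopology] Cbd_const by auto
  moreover have "mtopology interior_of \<Union>(range T) = {}" if "\<And>n. mtopology interior_of T n = {}"
    by (rule metric_Baire_category_alt[OF mcomplete_sup_dist]) (auto simp: closed that)
  ultimately obtain n where "mtopology interior_of T n \<noteq> {}" by force
  then obtain f0 where f0_interior: "f0 \<in> mtopology interior_of T n" by blast
  then have f0: "f0 \<in> Cbd v" using interior_of_subset_topspace by fastforce
  obtain r where "0 < r" and sub: "mball f0 r \<subseteq> mtopology interior_of T n"
    using openin_interior_of[of mtopology "T n"] f0_interior unfolding openin_mtopology by blast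
  have ball: "mball f0 r \<subseteq> T n" using sub interior_of_subset[of mtopology "T n"] by (rule order_trans)
  have "\<exists>g\<in>Cbd v. N g \<le> real n \<and> supnorm v (\<lambda>x. h x - g x) < e"
    if "h \<in> Cbd v" "supnorm v (\<lambda>x. f0 x - h x) < r" "0 < e" for h e
  proof -
    have "h \<in> T n" using ball that f0 by (auto simp: sup_dist_Cbd)
    then obtain g where "g \<in> Cbd v" "N g \<le> real n" "g \<in> mball h e"
      using \<open>0 < e\<close> unfolding T_def metric_closure_of by blast
    then show ?thesis by (auto simp: sup_dist_Cbd)
  qed
  then have "N_ball_dense_in_sup_ball r (real n)"
    by (rule N_ball_dense_in_sup_ball_if_dense_near[OF f0 \<open>0 < r\<close>])
  with \<open>0 < r\<close> show ?thesis by (intro that) auto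
qed

lemma N_ball_dense_in_sup_ball_scale:
  assumes dense: "N_ball_dense_in_sup_ball r M" and "c \<noteq> 0"
  shows "N_ball_dense_in_sup_ball (v c * r) (v c * M)"
  unfolding N_ball_dense_in_sup_ball_def
proof (intro ballI impI allI)
  fix h :: "'x \<Rightarrow> 'k" and e :: real
  assume h: "h \<in> Cbd v" "supnorm v h < v c * r" and "0 < e"
  have vc: "0 < v c" using \<open>c \<noteq> 0\<close> v_pos_iff by simp
  define h' where "h' = (\<lambda>x. inverse c * h x)"
  have "supnorm v h' = inverse (v c) * supnorm v h"
    unfolding h'_def supnorm_smult[OF h(1)] by (simp add: v_inverse)
  also have "\<dots> < inverse (v c) * (v c * r)" using h(2) vc by (intro mult_strict_left_mono) auto
  also have "\<dots> = r" using vc by (simp add: field_simps)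
  finally have h': "h' \<in> Cbd v" "supnorm v h' < r"
    unfolding h'_def by (simp_all add: Cbd_smult h(1))
  then obtain g where g: "g \<in> Cbd v" "N g \<le> M" "supnorm v (\<lambda>x. h' x - g x) < e / v c"
    using dense h' \<open>0 < e\<close> vc unfolding N_ball_dense_in_sup_ball_def by (meson divide_pos_pos)
  have "(\<lambda>x. h x - c * g x) = (\<lambda>x. c * (h' x - g x))"
    using \<open>c \<noteq> 0\<close> by (simp add: h'_def right_diff_distrib mult.assoc[symmetric])
  then have "supnorm v (\<lambda>x. h x - c * g x) < e"
    using g vc supnorm_smult[OF Cbd_diff[OF h'(1) g(1)], of c] by (simp add: field_simps)
  moreover have "N (\<lambda>x. c * g x) \<le> v c * M" using g vc N_smult by simp
  ultimately show "\<exists>g\<in>Cbd v. N g \<le> v c * M \<and> supnorm v (\<lambda>x. h x - g x) < e"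
    using Cbd_smult[OF g(1)] by blast
qed

lemma N_ball_dense_successive_approximation:
  assumes dense: "N_ball_dense_in_sup_ball r M" and p: "0 < v p" "v p < 1"
    and h: "h \<in> Cbd v" "supnorm v h < r"
  obtains R where "R 0 = h" "\<And>j. R j \<in> Cbd v" "\<And>j. supnorm v (R j) < r * v p ^ j"
    "\<And>j. N (\<lambda>x. R j x - R (Suc j) x) \<le> M * v p ^ j"
proof -
  have "0 < r" using h supnorm_nonneg by (meson le_less_trans)
  define admissible where "admissible j R g \<longleftrightarrow>
      g \<in> Cbd v \<and> N g \<le> M * v p ^ j \<and> supnorm v (\<lambda>x. R x - g x) < r * v p ^ Suc j" for j R g
  have exists_admissible: "\<exists>g. admissible j R g" if "R \<in> Cbd v" "supnorm v R < r * v p ^ j" for j R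
  proof -
    have "p ^ j \<noteq> 0" using p by auto
    from N_ball_dense_in_sup_ball_scale[OF dense this]
    have "N_ball_dense_in_sup_ball (r * v p ^ j) (M * v p ^ j)" by (simp add: v_power mult.commute)
    moreover have "0 < r * v p ^ Suc j" using \<open>0 < r\<close> p by simp
    ultimately have "\<exists>g\<in>Cbd v. N g \<le> M * v p ^ j \<and> supnorm v (\<lambda>x. R x - g x) < r * v p ^ Suc j"
      using that unfolding N_ball_dense_in_sup_ball_def by simp
    then show ?thesis unfolding admissible_def by blast
  qed
  have next_admissible: "admissible j R (SOME g. admissible j R g)"
    if "R \<in> Cbd v" "supnorm v R < r * v p ^ j" for j R
    using exists_admissible[OF that] by (rule someI_ex)
  define R where "R = rec_nat h (\<lambda>j Rj x. Rj x - (SOME g. admissible j Rj g) x)"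
  have R_Suc: "R (Suc j) = (\<lambda>x. R j x - (SOME g. admissible j (R j) g) x)" for j
    by (simp add: R_def)
  have R: "R j \<in> Cbd v \<and> supnorm v (R j) < r * v p ^ j" for j
  proof (induction j)
    case 0 then show ?case using h by (simp add: R_def)
  next
    case (Suc j) then show ?case
      using next_admissible[of "R j" j] Cbd_diff by (auto simp: R_Suc admissible_def)
  qed
  moreover have "N (\<lambda>x. R j x - R (Suc j) x) \<le> M * v p ^ j" for j
    using next_admissible[of "R j" j] R[of j] by (simp add: R_Suc admissible_def)
  moreover have "R 0 = h" by (simp add: R_def)
  ultimately show ?thesis using that by blast
qed

lemma N_le_if_N_ball_dense_in_sup_ball:
  assumes dense: "N_ball_dense_in_sup_ball r M" and "0 \<le> M"
    and h: "h \<in> Cbd v" "supnorm v h < r"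
  shows "N h \<le> M"
proof -
  obtain p where p: "0 < v p" "v p < 1" using v_nontrivial by blast
  obtain R where R: "R 0 = h" "\<And>j. R j \<in> Cbd v" "\<And>j. supnorm v (R j) < r * v p ^ j"
    and R_step: "\<And>j. N (\<lambda>x. R j x - R (Suc j) x) \<le> M * v p ^ j"
    using N_ball_dense_successive_approximation[OF dense p h] by blast
  define S where "S j x = h x - R j x" for j x
  have S: "S j \<in> Cbd v" for j using R h by (simp add: S_def[abs_def] Cbd_diff)
  have "N (\<lambda>x. S (Suc j) x - S j x) \<le> M * v p ^ j" for j
    using R_step[of j] by (simp add: S_def)
  then obtain G where G: "G \<in> Cbd v" and G_S: "\<And>n. N (\<lambda>x. G x - S n x) \<le> M * v p ^ n"
    using N_geometric_limit[of S M "v p", OF S \<open>0 \<le> M\<close>] p by auto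
  have "supnorm v (\<lambda>x. h x - G x) \<le> max r M * v p ^ n" for n
  proof -
    have "supnorm v (\<lambda>x. h x - G x) \<le> max (supnorm v (\<lambda>x. h x - S n x)) (supnorm v (\<lambda>x. S n x - G x))"
      by (rule supnorm_diff_le_max[OF h(1) S G])
    also have "\<dots> \<le> max (r * v p ^ n) (M * v p ^ n)"
    proof (rule max.mono)
      show "supnorm v (\<lambda>x. h x - S n x) \<le> r * v p ^ n" using R(3)[of n] by (simp add: S_def)
      show "supnorm v (\<lambda>x. S n x - G x) \<le> M * v p ^ n"
        using supnorm_le_N[OF Cbd_diff[OF S G], of n] G_S[of n] N_diff_commute[OF S G, of n] by simp
    qed
    also have "\<dots> = max r M * v p ^ n" using p by (simp add: max_mult_distrib_right)
    finally show ?thesis .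
  qed
  then have "supnorm v (\<lambda>x. h x - G x) \<le> 0"
    using p by (intro le_0_if_le_geometric[of "v p"]) auto
  then have "h = G" using supnorm_eq_0D[OF Cbd_diff[OF h(1) G]] by (simp add: fun_eq_iff)
  moreover have "N G \<le> M" using G_S[of 0] R(1) by (simp add: S_def)
  ultimately show ?thesis by simp
qed

lemma N_le_supnorm:
  obtains C where "\<And>f. f \<in> Cbd v \<Longrightarrow> N f \<le> C * supnorm v f"
proof -
  obtain r M where "0 < r" "0 \<le> M" and dense: "N_ball_dense_in_sup_ball r M"
    using exists_N_ball_dense_in_sup_ball by blast
  obtain p where p: "0 < v p" "v p < 1" using v_nontrivial by blast
  have "N f \<le> M / (r * v p) * supnorm v f" if f: "f \<in> Cbd v" for f
  proof (cases "supnorm v f = 0")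
    case True
    then show ?thesis using supnorm_eq_0D[OF f] by simp
  next
    case False
    then have t: "0 < supnorm v f" using supnorm_nonneg[OF f] by simp
    txt \<open>Rescale the dense ball by \<open>p powi k\<close> until it just contains \<open>f\<close>.\<close>
    obtain k where k: "supnorm v f / r < v p powi k" "v p powi k \<le> supnorm v f / r / v p"
      using exists_power_int_between[OF p, of "supnorm v f / r"] t \<open>0 < r\<close> by auto
    have vc: "v (p powi k) = v p powi k" by (rule v_power_int)
    have "p powi k \<noteq> 0" using p by auto
    from N_ball_dense_in_sup_ball_scale[OF dense this]
    have "N_ball_dense_in_sup_ball (v p powi k * r) (v p powi k * M)" by (simp only: vc)
    moreover have "supnorm v f < v p powi k * r" using k(1) \<open>0 < r\<close> by (simp add: field_simps)
    ultimately have "N f \<le> v p powi k * M"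
      using N_le_if_N_ball_dense_in_sup_ball[OF _ _ f] \<open>0 \<le> M\<close> p by simp
    also have "\<dots> \<le> supnorm v f / r / v p * M" using k(2) \<open>0 \<le> M\<close> by (rule mult_right_mono)
    finally show ?thesis by (simp add: field_simps)
  qed
  then show ?thesis by (rule that)
qed

end

lemma banach_k_algebraD:
  assumes "banach_k_algebra v sm nA"
  shows "0 \<le> nA x" "nA x = 0 \<longleftrightarrow> x = 0" "nA (x + y) \<le> max (nA x) (nA y)"
    "nA (x * y) \<le> nA x * nA y" "nA (sm c x) = v c * nA x"
    "kcauchy nA s \<Longrightarrow> \<exists>l. kconverges nA s l"
  using assms unfolding banach_k_algebra_def by (elim conjE; simp only:)+

lemma k_banach_spaceD:
  assumes "k_banach_space v sm nV"
  shows "0 \<le> nV x" "nV x = 0 \<longleftrightarrow> x = 0" "nV (x + y) \<le> max (nV x) (nV y)"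
    "nV (sm c x) = v c * nV x" "sm (c + d) x = sm c x + sm d x" "sm 1 x = x"
    "kcauchy nV s \<Longrightarrow> \<exists>l. kconverges nV s l"
  using assms unfolding k_banach_space_def by (elim conjE; simp only:)+

lemma opnorm_le:
  assumes "\<And>x. nV (T x) \<le> C * nV x" "0 \<le> C"
  shows "opnorm nV T \<le> C"
  unfolding opnorm_def by (rule cInf_lower) (use assms in \<open>auto intro: bdd_belowI[of _ 0]\<close>)

lemma opnorm_bound:
  assumes bound: "\<And>x. nV (T x) \<le> C * nV x" and nonneg: "\<And>x. 0 \<le> nV x"
  shows "nV (T x) \<le> opnorm nV T * nV x" and "0 \<le> opnorm nV T"
proof -
  have "max C 0 \<in> {C. 0 \<le> C \<and> (\<forall>x. nV (T x) \<le> C * nV x)}"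
    using bound nonneg by (simp add: max_mult_distrib_right le_max_iff_disj)
  then have ne: "{C. 0 \<le> C \<and> (\<forall>x. nV (T x) \<le> C * nV x)} \<noteq> {}" by blast
  show "0 \<le> opnorm nV T" unfolding opnorm_def by (rule cInf_greatest[OF ne]) simp
  show "nV (T x) \<le> opnorm nV T * nV x"
  proof (cases "nV x = 0")
    case True
    then show ?thesis using bound[of x] by simp
  next
    case False
    then have "0 < nV x" using nonneg[of x] by simp
    have "nV (T x) / nV x \<le> opnorm nV T"
      unfolding opnorm_def using \<open>0 < nV x\<close> by (intro cInf_greatest[OF ne]) (simp add: divide_le_eq)
    then show ?thesis using \<open>0 < nV x\<close> by (simp add: divide_le_eq)
  qed
qed

context complete_nonarch_field
begin

lemma unital_k_alg_hom_diff:
  fixes \<phi> :: "('x::topological_space \<Rightarrow> 'k) \<Rightarrow> 'a::ring_1"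
  assumes "unital_k_alg_hom v sm \<phi>" "f \<in> Cbd v" "g \<in> Cbd v"
  shows "\<phi> (\<lambda>x. f x - g x) = \<phi> f - \<phi> g"
proof -
  have add: "\<phi> (\<lambda>x. a x + b x) = \<phi> a + \<phi> b" if "a \<in> Cbd v" "b \<in> Cbd v" for a b
    using assms(1) that unfolding unital_k_alg_hom_def by blast
  have "\<phi> (\<lambda>x. (f x - g x) + g x) = \<phi> (\<lambda>x. f x - g x) + \<phi> g"
    using add[OF Cbd_diff[OF assms(2,3)] assms(3)] by simp
  then show ?thesis by (simp add: eq_diff_eq)
qed

lemma sup_continuous_on_Cbd_if_bounded:
  fixes \<phi> :: "('x::topological_space \<Rightarrow> 'k) \<Rightarrow> 'b::ab_group_add"
  assumes diff: "\<And>f g. f \<in> Cbd v \<Longrightarrow> g \<in> Cbd v \<Longrightarrow> nm (\<phi> g - \<phi> f) = nm (\<phi> (\<lambda>x. g x - f x))"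
    and bound: "\<And>f. f \<in> Cbd v \<Longrightarrow> nm (\<phi> f) \<le> C * supnorm v f"
  shows "sup_continuous_on_Cbd v nm \<phi>"
  unfolding sup_continuous_on_Cbd_def
proof (intro ballI allI impI)
  fix f :: "'x \<Rightarrow> 'k" and e :: real assume f: "f \<in> Cbd v" and "0 < e"
  show "\<exists>d>0. \<forall>g\<in>Cbd v. supnorm v (\<lambda>x. g x - f x) < d \<longrightarrow> nm (\<phi> g - \<phi> f) < e"
  proof (intro exI[of _ "e / max C 1"] conjI ballI impI)
    show "0 < e / max C 1" using \<open>0 < e\<close> by simp
    fix g assume g: "g \<in> Cbd v" and close: "supnorm v (\<lambda>x. g x - f x) < e / max C 1"
    have "nm (\<phi> g - \<phi> f) \<le> C * supnorm v (\<lambda>x. g x - f x)"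
      using diff[OF f g] bound[OF Cbd_diff[OF g f]] by simp
    also have "\<dots> \<le> max C 1 * supnorm v (\<lambda>x. g x - f x)"
      using supnorm_nonneg[OF Cbd_diff[OF g f]] by (intro mult_right_mono) auto
    also have "\<dots> < e" using close by (simp add: field_simps)
    finally show "nm (\<phi> g - \<phi> f) < e" .
  qed
qed

lemma complete_algebra_norm_hom:
  fixes \<phi> :: "('x::topological_space \<Rightarrow> 'k) \<Rightarrow> 'a::ring_1"
  assumes A: "banach_k_algebra v sm nA" and hom: "unital_k_alg_hom v sm \<phi>"
    and inj: "inj_on \<phi> (Cbd v)" and closed: "nclosed nA (\<phi> ` Cbd v)"
  shows "complete_algebra_norm v (\<lambda>f. nA (\<phi> f))"
proof unfold_locales
  fix f g :: "'x \<Rightarrow> 'k" and c assume f: "f \<in> Cbd v"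
  show "0 \<le> nA (\<phi> f)" using banach_k_algebraD(1)[OF A] .
  show "nA (\<phi> (\<lambda>x. c * f x)) = v c * nA (\<phi> f)"
    using hom f banach_k_algebraD(5)[OF A] by (simp add: unital_k_alg_hom_def)
  show "f = (\<lambda>x. 0)" if "nA (\<phi> f) = 0"
  proof -
    have "\<phi> f = \<phi> (\<lambda>x. 0)"
      using that banach_k_algebraD(2)[OF A] unital_k_alg_hom_diff[OF hom f f] by simp
    then show ?thesis using inj f Cbd_const unfolding inj_on_def by blast
  qed
  assume g: "g \<in> Cbd v"
  show "nA (\<phi> (\<lambda>x. f x + g x)) \<le> max (nA (\<phi> f)) (nA (\<phi> g))"
    using hom f g banach_k_algebraD(3)[OF A] by (simp add: unital_k_alg_hom_def)
  show "nA (\<phi> (\<lambda>x. f x * g x)) \<le> nA (\<phi> f) * nA (\<phi> g)"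
    using hom f g banach_k_algebraD(4)[OF A] by (simp add: unital_k_alg_hom_def)
next
  fix s :: "nat \<Rightarrow> 'x \<Rightarrow> 'k"
  assume s: "\<And>i. s i \<in> Cbd v"
    and Cauchy: "\<And>e. 0 < e \<Longrightarrow> \<exists>M. \<forall>m\<ge>M. \<forall>n\<ge>M. nA (\<phi> (\<lambda>x. s m x - s n x)) < e"
  have "kcauchy nA (\<lambda>n. \<phi> (s n))"
    using Cauchy unfolding kcauchy_def by (simp add: unital_k_alg_hom_diff[OF hom s s])
  then obtain l where l: "kconverges nA (\<lambda>n. \<phi> (s n)) l" using banach_k_algebraD(6)[OF A] by blast
  moreover have "\<forall>i. \<phi> (s i) \<in> \<phi> ` Cbd v" using s by blast
  ultimately have "l \<in> \<phi> ` Cbd v" using closed[unfolded nclosed_def] by simp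
  then obtain f where f: "f \<in> Cbd v" "l = \<phi> f" by blast
  have "(\<lambda>n. nA (\<phi> (\<lambda>x. s n x - f x))) \<longlonglongrightarrow> 0"
    using l f by (simp add: kconverges_def unital_k_alg_hom_diff[OF hom s f(1)])
  then have "\<forall>e>0. \<exists>M. \<forall>n\<ge>M. nA (\<phi> (\<lambda>x. s n x - f x)) < e"
    using banach_k_algebraD(1)[OF A] by (simp add: LIMSEQ_iff)
  with f show "\<exists>l\<in>Cbd v. \<forall>e>0. \<exists>M. \<forall>n\<ge>M. nA (\<phi> (\<lambda>x. s n x - l x)) < e" by blast
qed

end

context complete_nonarch_field
begin

lemma k_banach_space_norm_uminus:
  assumes B: "k_banach_space v sm nV"
  shows "nV (- x) = nV x"
proof -
  have "sm 0 x = sm 0 x + sm 0 x" using k_banach_spaceD(5)[OF B, of 0 0 x] by simp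
  moreover have "sm 0 x = sm (-1) x + x"
    using k_banach_spaceD(5)[OF B, of "-1" 1 x] k_banach_spaceD(6)[OF B, of x] by simp
  ultimately have "sm (-1) x = - x" by (simp add: eq_neg_iff_add_eq_0)
  then show ?thesis using k_banach_spaceD(4)[OF B, of "-1" x] by simp
qed

lemma Bops_diff_bounded:
  assumes B: "k_banach_space v sm nV" and "T \<in> Bops sm nV" "S \<in> Bops sm nV"
  obtains C where "\<And>w. nV (T w - S w) \<le> C * nV w"
proof -
  obtain CT CS where CT: "\<And>w. nV (T w) \<le> CT * nV w" and CS: "\<And>w. nV (S w) \<le> CS * nV w"
    using assms(2,3) unfolding Bops_def by blast
  have "nV (T w - S w) \<le> max CT CS * nV w" for w
  proof -
    have "nV (T w - S w) \<le> max (nV (T w)) (nV (- S w))"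
      using k_banach_spaceD(3)[OF B, of "T w" "- S w"] by simp
    also have "\<dots> \<le> max (CT * nV w) (CS * nV w)"
      using CT[of w] CS[of w] k_banach_space_norm_uminus[OF B, of "S w"] by (intro max.mono) simp_all
    also have "\<dots> = max CT CS * nV w" using k_banach_spaceD(1)[OF B] by (simp add: max_mult_distrib_right)
    finally show ?thesis .
  qed
  then show ?thesis by (rule that)
qed

lemma Bops_diff_le_opnorm:
  assumes B: "k_banach_space v sm nV" and "T \<in> Bops sm nV" "S \<in> Bops sm nV"
  shows "nV (T w - S w) \<le> opnorm nV (\<lambda>w. T w - S w) * nV w"
proof -
  obtain C where "\<And>w. nV (T w - S w) \<le> C * nV w" using Bops_diff_bounded[OF assms] by blast
  then show ?thesis by (rule opnorm_bound(1)[where T = "\<lambda>w. T w - S w", OF _ k_banach_spaceD(1)[OF B]])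
qed

lemma Bops_Cauchy_pointwise_limit:
  fixes T :: "nat \<Rightarrow> 'w::ab_group_add \<Rightarrow> 'w"
  assumes B: "k_banach_space v sm nV" and T: "\<And>i. T i \<in> Bops sm nV"
    and Cauchy: "\<And>e. 0 < e \<Longrightarrow> \<exists>M. \<forall>m\<ge>M. \<forall>n\<ge>M. opnorm nV (\<lambda>w. T m w - T n w) < e"
  obtains L where "\<And>w. (\<lambda>n. nV (T n w - L w)) \<longlonglongrightarrow> 0"
proof -
  note nonneg = k_banach_spaceD(1)[OF B]
  have "kcauchy nV (\<lambda>n. T n w)" for w
    unfolding kcauchy_def
  proof (intro allI impI)
    fix e :: real assume "0 < e"
    then obtain M where M: "\<forall>m\<ge>M. \<forall>n\<ge>M. opnorm nV (\<lambda>w. T m w - T n w) < e / (nV w + 1)"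
      using Cauchy[of "e / (nV w + 1)"] nonneg[of w] by (auto simp: add_nonneg_pos)
    have "nV (T m w - T n w) < e" if "M \<le> m" "M \<le> n" for m n
    proof -
      have "opnorm nV (\<lambda>w. T m w - T n w) \<le> e / (nV w + 1)" using M that by (simp add: less_imp_le)
      then have "nV (T m w - T n w) \<le> e / (nV w + 1) * nV w"
        using Bops_diff_le_opnorm[OF B T[of m] T[of n], of w] nonneg[of w] by (meson mult_right_mono order_trans)
      also have "\<dots> < e" using \<open>0 < e\<close> nonneg[of w] by (simp add: field_simps)
      finally show ?thesis .
    qed
    then show "\<exists>N. \<forall>m\<ge>N. \<forall>n\<ge>N. nV (T m w - T n w) < e" by blast
  qed
  then have "\<forall>w. \<exists>l. kconverges nV (\<lambda>n. T n w) l" using k_banach_spaceD(7)[OF B] by blast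
  then obtain L where "\<And>w. kconverges nV (\<lambda>n. T n w) (L w)" by metis
  then have "\<And>w. (\<lambda>n. nV (T n w - L w)) \<longlonglongrightarrow> 0" by (simp add: kconverges_def)
  then show ?thesis by (rule that)
qed

lemma Bops_Cauchy_limit:
  fixes T :: "nat \<Rightarrow> 'w::ab_group_add \<Rightarrow> 'w"
  assumes B: "k_banach_space v sm nV" and T: "\<And>i. T i \<in> Bops sm nV"
    and Cauchy: "\<And>e. 0 < e \<Longrightarrow> \<exists>M. \<forall>m\<ge>M. \<forall>n\<ge>M. opnorm nV (\<lambda>w. T m w - T n w) < e"
  obtains L where "(\<lambda>i. opnorm nV (\<lambda>w. T i w - L w)) \<longlonglongrightarrow> 0"
proof -
  note nonneg = k_banach_spaceD(1)[OF B]
  obtain L where L: "\<And>w. (\<lambda>n. nV (T n w - L w)) \<longlonglongrightarrow> 0"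
    using Bops_Cauchy_pointwise_limit[OF B T Cauchy] by blast
  have small: "opnorm nV (\<lambda>w. T n w - L w) \<le> e \<and> 0 \<le> opnorm nV (\<lambda>w. T n w - L w)"
    if "\<forall>m\<ge>M. \<forall>n\<ge>M. opnorm nV (\<lambda>w. T m w - T n w) < e" "M \<le> n" "0 < e" for M n e
  proof -
    have bound: "nV (T n w - L w) \<le> e * nV w" for w
    proof (rule ultrametric_limit_le[where M = M, OF k_banach_spaceD(3)[OF B] nonneg L])
      fix m assume "M \<le> m"
      then have "opnorm nV (\<lambda>w. T n w - T m w) \<le> e" using that by (simp add: less_imp_le)
      then show "nV (T n w - T m w) \<le> e * nV w"
        using Bops_diff_le_opnorm[OF B T[of n] T[of m], of w] nonneg[of w] by (meson mult_right_mono order_trans)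
    qed
    then show ?thesis
      using opnorm_le[where nV = nV and T = "\<lambda>w. T n w - L w", OF bound] \<open>0 < e\<close>
        opnorm_bound(2)[where nV = nV and T = "\<lambda>w. T n w - L w", OF bound nonneg] by simp
  qed
  have "(\<lambda>i. opnorm nV (\<lambda>w. T i w - L w)) \<longlonglongrightarrow> 0"
  proof (rule LIMSEQ_I)
    fix r :: real assume "0 < r"
    then obtain M where "\<forall>m\<ge>M. \<forall>n\<ge>M. opnorm nV (\<lambda>w. T m w - T n w) < r / 2"
      using Cauchy[of "r / 2"] by auto
    then have "norm (opnorm nV (\<lambda>w. T n w - L w) - 0) < r" if "M \<le> n" for n
      using small[of M "r / 2" n] that \<open>0 < r\<close> by auto
    then show "\<exists>no. \<forall>n\<ge>no. norm (opnorm nV (\<lambda>w. T n w - L w) - 0) < r" by blast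
  qed
  then show ?thesis by (rule that)
qed

lemma unital_k_alg_hom_ops_diff:
  fixes \<rho> :: "('x::topological_space \<Rightarrow> 'k) \<Rightarrow> ('w::ab_group_add \<Rightarrow> 'w)"
  assumes "unital_k_alg_hom_ops v sm nV \<rho>" "f \<in> Cbd v" "g \<in> Cbd v"
  shows "\<rho> (\<lambda>x. f x - g x) = (\<lambda>w. \<rho> f w - \<rho> g w)"
proof -
  have add: "\<rho> (\<lambda>x. a x + b x) = (\<lambda>w. \<rho> a w + \<rho> b w)" if "a \<in> Cbd v" "b \<in> Cbd v" for a b
    using assms(1) that unfolding unital_k_alg_hom_ops_def by blast
  have "\<rho> (\<lambda>x. (f x - g x) + g x) = (\<lambda>w. \<rho> (\<lambda>x. f x - g x) w + \<rho> g w)"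
    using add[OF Cbd_diff[OF assms(2,3)] assms(3)] by simp
  then show ?thesis by (simp add: fun_eq_iff eq_diff_eq)
qed

lemma Bops_bounded:
  assumes B: "k_banach_space v sm nV" and "T \<in> Bops sm nV"
  shows "nV (T w) \<le> opnorm nV T * nV w" "0 \<le> opnorm nV T"
proof -
  obtain C where "\<And>w. nV (T w) \<le> C * nV w" using assms(2) unfolding Bops_def by blast
  then show "nV (T w) \<le> opnorm nV T * nV w" "0 \<le> opnorm nV T"
    using opnorm_bound[where nV = nV and T = T, OF _ k_banach_spaceD(1)[OF B]] by blast+
qed

lemma opnorm_add_le:
  assumes B: "k_banach_space v sm nV" and T: "T \<in> Bops sm nV" and S: "S \<in> Bops sm nV"
  shows "opnorm nV (\<lambda>w. T w + S w) \<le> max (opnorm nV T) (opnorm nV S)"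
proof (rule opnorm_le)
  fix w
  have "nV (T w + S w) \<le> max (nV (T w)) (nV (S w))" by (rule k_banach_spaceD(3)[OF B])
  also have "\<dots> \<le> max (opnorm nV T * nV w) (opnorm nV S * nV w)"
    by (intro max.mono Bops_bounded(1)[OF B T] Bops_bounded(1)[OF B S])
  also have "\<dots> = max (opnorm nV T) (opnorm nV S) * nV w"
    using k_banach_spaceD(1)[OF B] by (simp add: max_mult_distrib_right)
  finally show "nV (T w + S w) \<le> max (opnorm nV T) (opnorm nV S) * nV w" .
  show "0 \<le> max (opnorm nV T) (opnorm nV S)" using Bops_bounded(2)[OF B T] by simp
qed

lemma opnorm_comp_le:
  assumes B: "k_banach_space v sm nV" and T: "T \<in> Bops sm nV" and S: "S \<in> Bops sm nV"
  shows "opnorm nV (T \<circ> S) \<le> opnorm nV T * opnorm nV S"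
proof (rule opnorm_le)
  fix w
  have "nV (T (S w)) \<le> opnorm nV T * nV (S w)" by (rule Bops_bounded(1)[OF B T])
  also have "\<dots> \<le> opnorm nV T * (opnorm nV S * nV w)"
    by (intro mult_left_mono Bops_bounded[OF B S] Bops_bounded(2)[OF B T])
  finally show "nV ((T \<circ> S) w) \<le> opnorm nV T * opnorm nV S * nV w" by (simp add: mult.assoc)
  show "0 \<le> opnorm nV T * opnorm nV S" using Bops_bounded(2)[OF B T] Bops_bounded(2)[OF B S] by simp
qed

lemma opnorm_smult:
  assumes B: "k_banach_space v sm nV" and T: "T \<in> Bops sm nV"
  shows "opnorm nV (\<lambda>w. sm c (T w)) = v c * opnorm nV T"
proof (rule antisym)
  have scaled: "nV (sm c (T w)) = v c * nV (T w)" for w by (rule k_banach_spaceD(4)[OF B])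
  show "opnorm nV (\<lambda>w. sm c (T w)) \<le> v c * opnorm nV T"
    using Bops_bounded[OF B T] v_nonneg[of c] by (intro opnorm_le) (simp_all add: scaled mult.assoc mult_left_mono)
  have "opnorm nV (\<lambda>w. sm c (T w)) \<ge> 0"
    using opnorm_bound(2)[where nV = nV and T = "\<lambda>w. sm c (T w)", OF _ k_banach_spaceD(1)[OF B]]
      Bops_bounded(1)[OF B T] by (metis mult.assoc mult_left_mono scaled v_nonneg)
  moreover have "v c * opnorm nV T \<le> opnorm nV (\<lambda>w. sm c (T w))" if "c \<noteq> 0"
  proof -
    have vc: "0 < v c" using that v_pos_iff by simp
    have "opnorm nV T \<le> opnorm nV (\<lambda>w. sm c (T w)) / v c"
    proof (rule opnorm_le)
      fix w
      have "nV (sm c (T w)) \<le> opnorm nV (\<lambda>w. sm c (T w)) * nV w"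
        using opnorm_bound(1)[where nV = nV and T = "\<lambda>w. sm c (T w)", OF _ k_banach_spaceD(1)[OF B]]
          Bops_bounded(1)[OF B T] by (metis mult.assoc mult_left_mono scaled v_nonneg)
      then show "nV (T w) \<le> opnorm nV (\<lambda>w. sm c (T w)) / v c * nV w"
        using vc by (simp add: scaled field_simps)
      show "0 \<le> opnorm nV (\<lambda>w. sm c (T w)) / v c" using \<open>opnorm nV _ \<ge> 0\<close> vc by simp
    qed
    then show ?thesis using vc by (simp add: field_simps)
  qed
  ultimately show "v c * opnorm nV T \<le> opnorm nV (\<lambda>w. sm c (T w))"
    by (cases "c = 0") auto
qed

lemma unital_k_alg_hom_ops_Bops:
  "unital_k_alg_hom_ops v sm nV \<rho> \<Longrightarrow> f \<in> Cbd v \<Longrightarrow> \<rho> f \<in> Bops sm nV"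
  unfolding unital_k_alg_hom_ops_def by blast

lemma opnorm_hom_complete:
  fixes \<rho> :: "('x::topological_space \<Rightarrow> 'k) \<Rightarrow> ('w::ab_group_add \<Rightarrow> 'w)"
    and s :: "nat \<Rightarrow> 'x \<Rightarrow> 'k"
  assumes B: "k_banach_space v sm nV" and hom: "unital_k_alg_hom_ops v sm nV \<rho>"
    and closed: "opclosed nV (\<rho> ` Cbd v)" and s: "\<And>i. s i \<in> Cbd v"
    and Cauchy: "\<And>e. 0 < e \<Longrightarrow> \<exists>M. \<forall>m\<ge>M. \<forall>n\<ge>M. opnorm nV (\<rho> (\<lambda>x. s m x - s n x)) < e"
  shows "\<exists>l\<in>Cbd v. \<forall>e>0. \<exists>M. \<forall>n\<ge>M. opnorm nV (\<rho> (\<lambda>x. s n x - l x)) < e"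
proof -
  note Bops = unital_k_alg_hom_ops_Bops[OF hom]
  have "\<exists>M. \<forall>m\<ge>M. \<forall>n\<ge>M. opnorm nV (\<lambda>w. \<rho> (s m) w - \<rho> (s n) w) < e" if "0 < e" for e
    using Cauchy[OF that] by (simp add: unital_k_alg_hom_ops_diff[OF hom s s])
  then obtain L where L: "(\<lambda>i. opnorm nV (\<lambda>w. \<rho> (s i) w - L w)) \<longlonglongrightarrow> 0"
    using Bops_Cauchy_limit[where T = "\<lambda>i. \<rho> (s i)", OF B Bops[OF s]] by blast
  moreover have "\<forall>i. \<rho> (s i) \<in> \<rho> ` Cbd v" using s by blast
  ultimately have "L \<in> \<rho> ` Cbd v" using closed[unfolded opclosed_def] by simp
  then obtain f where f: "f \<in> Cbd v" "L = \<rho> f" by blast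
  have "\<forall>e>0. \<exists>M. \<forall>n\<ge>M. opnorm nV (\<rho> (\<lambda>x. s n x - f x)) < e"
    using L Bops_bounded(2)[OF B Bops[OF Cbd_diff[OF s f(1)]]]
    by (simp add: LIMSEQ_iff f(2) unital_k_alg_hom_ops_diff[OF hom s f(1)])
  with f show ?thesis by blast
qed

lemma complete_algebra_norm_ops:
  fixes \<rho> :: "('x::topological_space \<Rightarrow> 'k) \<Rightarrow> ('w::ab_group_add \<Rightarrow> 'w)"
  assumes B: "k_banach_space v sm nV" and hom: "unital_k_alg_hom_ops v sm nV \<rho>"
    and inj: "inj_on \<rho> (Cbd v)" and closed: "opclosed nV (\<rho> ` Cbd v)"
  shows "complete_algebra_norm v (\<lambda>f. opnorm nV (\<rho> f))"
proof unfold_locales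
  note Bops = unital_k_alg_hom_ops_Bops[OF hom]
  fix f g :: "'x \<Rightarrow> 'k" and c assume f: "f \<in> Cbd v"
  show "0 \<le> opnorm nV (\<rho> f)" by (rule Bops_bounded(2)[OF B Bops[OF f]])
  show "opnorm nV (\<rho> (\<lambda>x. c * f x)) = v c * opnorm nV (\<rho> f)"
    using hom f opnorm_smult[OF B Bops[OF f]] by (simp add: unital_k_alg_hom_ops_def)
  show "f = (\<lambda>x. 0)" if "opnorm nV (\<rho> f) = 0"
  proof -
    have "nV (\<rho> f w) = 0" for w
      using Bops_bounded(1)[OF B Bops[OF f], of w] k_banach_spaceD(1)[OF B, of "\<rho> f w"] that by simp
    then have "\<rho> f = \<rho> (\<lambda>x. 0)"
      using unital_k_alg_hom_ops_diff[OF hom f f] k_banach_spaceD(2)[OF B] by (simp add: fun_eq_iff)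
    then show ?thesis using inj f Cbd_const unfolding inj_on_def by blast
  qed
  assume g: "g \<in> Cbd v"
  show "opnorm nV (\<rho> (\<lambda>x. f x + g x)) \<le> max (opnorm nV (\<rho> f)) (opnorm nV (\<rho> g))"
    using hom f g opnorm_add_le[OF B Bops[OF f] Bops[OF g]] by (simp add: unital_k_alg_hom_ops_def)
  show "opnorm nV (\<rho> (\<lambda>x. f x * g x)) \<le> opnorm nV (\<rho> f) * opnorm nV (\<rho> g)"
    using hom f g opnorm_comp_le[OF B Bops[OF f] Bops[OF g]] by (simp add: unital_k_alg_hom_ops_def)
qed (rule opnorm_hom_complete[OF B hom closed])

end

theorem mainTheorem14:
  fixes v :: "'k::field \<Rightarrow> real"
  assumes "local_field v"
  shows "(\<forall>(sm :: 'k \<Rightarrow> 'a::ring_1 \<Rightarrow> 'a) nA (\<phi> :: ('x::topological_space \<Rightarrow> 'k) \<Rightarrow> 'a).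
            banach_k_algebra v sm nA \<and> unital_k_alg_hom v sm \<phi> \<and>
            inj_on \<phi> (Cbd v) \<and> nclosed nA (\<phi> ` Cbd v)
            \<longrightarrow> sup_continuous_on_Cbd v nA \<phi>)
       \<and> (\<forall>(smV :: 'k \<Rightarrow> 'v::ab_group_add \<Rightarrow> 'v) nV (\<rho> :: ('x \<Rightarrow> 'k) \<Rightarrow> ('v \<Rightarrow> 'v)).
            k_banach_space v smV nV \<and> unital_k_alg_hom_ops v smV nV \<rho> \<and>
            inj_on \<rho> (Cbd v) \<and> opclosed nV (\<rho> ` Cbd v)
            \<longrightarrow> (\<exists>C. \<forall>f\<in>Cbd v. opnorm nV (\<rho> f) \<le> C * supnorm v f))"
proof (intro conjI allI impI; elim conjE)
  interpret complete_nonarch_field v by (rule local_field_imp_complete_nonarch_field[OF assms])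
  fix sm :: "'k \<Rightarrow> 'a \<Rightarrow> 'a" and nA and \<phi> :: "('x \<Rightarrow> 'k) \<Rightarrow> 'a"
  assume "banach_k_algebra v sm nA" and hom: "unital_k_alg_hom v sm \<phi>"
    and "inj_on \<phi> (Cbd v)" "nclosed nA (\<phi> ` Cbd v)"
  then interpret complete_algebra_norm v "\<lambda>f. nA (\<phi> f)" by (rule complete_algebra_norm_hom)
  obtain C where "\<And>f. f \<in> Cbd v \<Longrightarrow> nA (\<phi> f) \<le> C * supnorm v f" using N_le_supnorm by blast
  then show "sup_continuous_on_Cbd v nA \<phi>"
    using unital_k_alg_hom_diff[OF hom] by (intro sup_continuous_on_Cbd_if_bounded) auto
next
  interpret complete_nonarch_field v by (rule local_field_imp_complete_nonarch_field[OF assms])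
  fix smV :: "'k \<Rightarrow> 'v \<Rightarrow> 'v" and nV and \<rho> :: "('x \<Rightarrow> 'k) \<Rightarrow> ('v \<Rightarrow> 'v)"
  assume "k_banach_space v smV nV" "unital_k_alg_hom_ops v smV nV \<rho>"
    "inj_on \<rho> (Cbd v)" "opclosed nV (\<rho> ` Cbd v)"
  then interpret complete_algebra_norm v "\<lambda>f. opnorm nV (\<rho> f)" by (rule complete_algebra_norm_ops)
  obtain C where "\<And>f. f \<in> Cbd v \<Longrightarrow> opnorm nV (\<rho> f) \<le> C * supnorm v f" using N_le_supnorm by blast
  then show "\<exists>C. \<forall>f\<in>Cbd v. opnorm nV (\<rho> f) \<le> C * supnorm v f" by blast
qed

end
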